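(* Let $f \in \mathrm{Inj}(\Omega)$ satisfy $(f)\mathrm{C}_{\mathrm{open}} + (f)\mathrm{C}_{\mathrm{fwd}} = 1$ and $(f)\mathrm{C}_n < \aleph_0$ for all $n \in \mathbb{Z}_+$, and let $h \in \mathrm{Fin}(\Omega)$ be a transposition. Then $$\sum_{n \in \mathbb{Z}_+} ((f)\mathrm{C}_n - (fh)\mathrm{C}_n) = \sum_{n \in \mathbb{Z}_+} ((f)\mathrm{C}_n - (hf)\mathrm{C}_n) \in \{-1,1\}$$ (only finitely many terms of each sum are nonzero).
   Context: $\Omega$ is a countably infinite set; maps are written on the right and composed left to right. $\mathrm{Inj}(\Omega)$ is the monoid of injective maps $\Omega\to\Omega$; $\mathrm{Fin}(\Omega)$ the permutations moving only finitely many points; a transposition swaps two distinct points and fixes all others. For $f\in\mathrm{Inj}(\Omega)$, a cycle of $f$ is a nonempty $\Sigma\subseteq\Omega$ such that (a) for all $\alpha\in\Omega$, $(\alpha)f\in\Sigma$ iff $\alpha\in\Sigma$, and (b) no proper nonempty subset of $\Sigma$ satisfies (a). A forward cycle is an infinite cycle $\Sigma$ with $\Sigma\setminus(\Omega)f\ne\emptyset$; an open cycle is an infinite cycle that is not forward. $(f)\mathrm{C}_n$ ($n\in\mathbb{Z}_+$) is the cardinal number of cycles of cardinality $n$; $(f)\mathrm{C}_{\mathrm{open}}$, $(f)\mathrm{C}_{\mathrm{fwd}}$ the numbers of open and forward cycles. *)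

theory Defs
  imports Main "HOL-Library.Countable" "HOL-Combinatorics.Transposition"
begin

text \<open>Omega is the (countably infinite) universe of the type 'a.
  Maps are written on the right in the paper, so the paper's product fh
  (first f, then h) is the HOL composition h o f.\<close>

definition is_cycle :: "('a \<Rightarrow> 'a) \<Rightarrow> 'a set \<Rightarrow> bool" where
  "is_cycle f S \<longleftrightarrow> S \<noteq> {} \<and> (\<forall>x. f x \<in> S \<longleftrightarrow> x \<in> S) \<and>
     \<not> (\<exists>T. T \<noteq> {} \<and> T \<subset> S \<and> (\<forall>x. f x \<in> T \<longleftrightarrow> x \<in> T))"

definition cycles_of_size :: "('a \<Rightarrow> 'a) \<Rightarrow> nat \<Rightarrow> 'a set set" where
  "cycles_of_size f n = {S. is_cycle f S \<and> finite S \<and> card S = n}"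

definition fwd_cycles :: "('a \<Rightarrow> 'a) \<Rightarrow> 'a set set" where
  "fwd_cycles f = {S. is_cycle f S \<and> infinite S \<and> S - range f \<noteq> {}}"

definition open_cycles :: "('a \<Rightarrow> 'a) \<Rightarrow> 'a set set" where
  "open_cycles f = {S. is_cycle f S \<and> infinite S \<and> S - range f = {}}"

end

theory Submission
  imports Defs
begin

text \<open>
  The only cycles that can change when f is
  replaced by h o f (the paper's fh) are the cycles of a and b:

  \<^item> if b lies on the forward orbit of a, the common cycle is split, and the part through a
    becomes a finite cycle, so h o f has exactly one more finite cycle among those of a and b;
  \<^item> otherwise a and b lie on distinct cycles, one of which is finite (at most one cycle is
    infinite), and h o f merges them, losing exactly one finite cycle.

  Summing the change over all sizes therefore gives -1 or 1.  Finally f o h (the paper's hf) is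
  conjugate to h o f by the involution h, so both sums agree.
\<close>

subsection \<open>Cycles as connected components\<close>

definition joined :: "('a \<Rightarrow> 'a) \<Rightarrow> 'a \<Rightarrow> 'a \<Rightarrow> bool" where
  "joined f x y \<longleftrightarrow> (\<exists>m n. (f^^m) x = (f^^n) y)"

definition component :: "('a \<Rightarrow> 'a) \<Rightarrow> 'a \<Rightarrow> 'a set" where
  "component f x = {y. joined f x y}"

text \<open>A set is completely invariant if it equals its own preimage; cycles in the sense of
  is_cycle are exactly the minimal nonempty such sets.\<close>
definition invariant :: "('a \<Rightarrow> 'a) \<Rightarrow> 'a set \<Rightarrow> bool" where
  "invariant f T \<longleftrightarrow> (\<forall>x. f x \<in> T \<longleftrightarrow> x \<in> T)"

lemma invariant_funpow:
  assumes "invariant f T"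
  shows "(f^^m) x \<in> T \<longleftrightarrow> x \<in> T"
  using assms by (induction m) (auto simp: invariant_def)

lemma invariant_Un: "invariant f S \<Longrightarrow> invariant f T \<Longrightarrow> invariant f (S \<union> T)"
  unfolding invariant_def by blast

lemma funpow_in_component: "(f^^m) x \<in> component f x"
  unfolding component_def joined_def mem_Collect_eq by (rule exI[of _ m], rule exI[of _ 0]) simp

lemma component_self: "x \<in> component f x"
  using funpow_in_component[where m = 0] by simp

lemma component_subset:
  assumes "invariant f T" "x \<in> T"
  shows "component f x \<subseteq> T"
proof
  fix y assume "y \<in> component f x"
  then obtain m n where mn: "(f^^m) x = (f^^n) y" unfolding component_def joined_def by blast
  have "(f^^m) x \<in> T" using invariant_funpow[OF assms(1)] assms(2) by blast
  then show "y \<in> T" unfolding mn invariant_funpow[OF assms(1)] .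
qed

lemma joined_sym: "joined f x y \<Longrightarrow> joined f y x"
  unfolding joined_def by metis

lemma joined_trans:
  assumes "joined f x y" "joined f y z"
  shows "joined f x z"
proof -
  obtain m n p q where xy: "(f^^m) x = (f^^n) y" and yz: "(f^^p) y = (f^^q) z"
    using assms unfolding joined_def by blast
  have "(f^^(p + m)) x = (f^^p) ((f^^n) y)" using xy by (simp add: funpow_add)
  also have "\<dots> = (f^^n) ((f^^p) y)" by (metis comp_apply funpow_add add.commute)
  also have "\<dots> = (f^^(n + q)) z" using yz by (simp add: funpow_add)
  finally show ?thesis unfolding joined_def by blast
qed

lemma joined_step: "joined f y (f y)"
  unfolding joined_def by (rule exI[of _ 1], rule exI[of _ 0]) simp

lemma component_eq:
  assumes "y \<in> component f x"
  shows "component f y = component f x"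
proof -
  have xy: "joined f x y" using assms unfolding component_def by simp
  show ?thesis unfolding component_def
    by (auto intro: joined_trans[OF xy] joined_trans[OF joined_sym[OF xy]])
qed

lemma invariant_component: "invariant f (component f x)"
  unfolding invariant_def component_def mem_Collect_eq
  by (meson joined_step joined_sym joined_trans)

lemma is_cycle_invariant:
  "is_cycle f S \<longleftrightarrow> S \<noteq> {} \<and> invariant f S \<and> \<not> (\<exists>T. T \<noteq> {} \<and> T \<subset> S \<and> invariant f T)"
  by (simp only: is_cycle_def invariant_def)

lemma is_cycle_iff_component: "is_cycle f S \<longleftrightarrow> (\<exists>x. S = component f x)"
proof
  assume "is_cycle f S"
  then have inv: "invariant f S" and ne: "S \<noteq> {}"
    and minimal: "\<And>T. T \<noteq> {} \<Longrightarrow> T \<subset> S \<Longrightarrow> \<not> invariant f T"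
    unfolding is_cycle_invariant by blast+
  obtain x where x: "x \<in> S" using ne by blast
  have sub: "component f x \<subseteq> S" by (rule component_subset[OF inv x])
  have "component f x \<noteq> {}" using component_self by fast
  then have "\<not> component f x \<subset> S" using minimal invariant_component by metis
  then show "\<exists>x. S = component f x" using sub by auto
next
  assume "\<exists>x. S = component f x"
  then obtain x where S: "S = component f x" ..
  have eq: "T = S" if T: "T \<noteq> {}" "T \<subseteq> S" "invariant f T" for T
  proof -
    obtain y where y: "y \<in> T" using T(1) by blast
    then have "component f y = S" using S T(2) component_eq[of y f x] by auto
    then show ?thesis using component_subset[OF T(3) y] T(2) by auto
  qed
  have "\<not> (\<exists>T. T \<noteq> {} \<and> T \<subset> S \<and> invariant f T)"
  proof
    assume "\<exists>T. T \<noteq> {} \<and> T \<subset> S \<and> invariant f T"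
    then obtain T where "T \<noteq> {}" "T \<subset> S" "invariant f T" by blast
    then show False using eq[of T] by blast
  qed
  moreover have "S \<noteq> {}" using S component_self by fast
  moreover have "invariant f S" using S invariant_component by simp
  ultimately show "is_cycle f S" unfolding is_cycle_invariant by simp
qed

text \<open>Since iterates of an injection are injective, a meeting of two orbits can be cancelled
  down to a relation between the starting points.\<close>
lemma funpow_cancel:
  assumes "inj f" "(f^^m) x = (f^^n) y" "n \<le> m"
  shows "(f^^(m - n)) x = y"
proof -
  have "(f^^(n + (m - n))) x = (f^^n) ((f^^(m - n)) x)" by (simp only: funpow_add comp_apply)
  then have "(f^^n) ((f^^(m - n)) x) = (f^^n) y" using assms(2,3) by simp
  then show ?thesis using inj_fn[OF assms(1), of n] by (simp add: inj_eq)
qed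

lemma component_periodic:
  assumes "inj f" "(f^^k) x = x" "0 < k"
  shows "component f x = (\<lambda>j. (f^^j) x) ` {..<k}"
proof
  show "(\<lambda>j. (f^^j) x) ` {..<k} \<subseteq> component f x"
    using funpow_in_component by fast
next
  show "component f x \<subseteq> (\<lambda>j. (f^^j) x) ` {..<k}"
  proof
    fix y assume "y \<in> component f x"
    then obtain m n where mn: "(f^^m) x = (f^^n) y" unfolding component_def joined_def by blast
    define M where "M = m + n * k"
    have "n \<le> n * k" using assms(3) by simp
    then have "n \<le> M" unfolding M_def by linarith
    have "M mod k = m mod k" unfolding M_def by simp
    then have "(f^^M) x = (f^^m) x"
      using funpow_mod_eq[OF assms(2), of M] funpow_mod_eq[OF assms(2), of m] by simp
    then have "y = (f^^(M - n)) x" using funpow_cancel[OF assms(1) _ \<open>n \<le> M\<close>] mn by simp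
    also have "\<dots> = (f^^((M - n) mod k)) x" using funpow_mod_eq[OF assms(2)] by simp
    finally show "y \<in> (\<lambda>j. (f^^j) x) ` {..<k}" using assms(3) by simp
  qed
qed

lemma finite_component_periodic:
  assumes "inj f" "finite (component f x)"
  obtains k where "0 < k" "(f^^k) x = x"
proof (rule funpow_inj_finite[OF assms(1)])
  have "{y. \<exists>n. y = (f^^n) x} \<subseteq> component f x" using funpow_in_component by fast
  then show "finite {y. \<exists>n. y = (f^^n) x}" using assms(2) by (rule finite_subset)
qed

subsection \<open>Composing with a transposition\<close>

text \<open>Composing twice with the same transposition gives back f; this lets every statement about
  f and transpose a b o f be applied in both directions.\<close>
lemma swap_swap: "transpose a b \<circ> (transpose a b \<circ> f) = f"
  by (simp add: fun_eq_iff)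

lemma invariant_swap:
  assumes "invariant f T" "a \<in> T \<longleftrightarrow> b \<in> T"
  shows "invariant (transpose a b \<circ> f) T"
proof -
  have "transpose a b y \<in> T \<longleftrightarrow> y \<in> T" for y
    using assms(2) by (cases "y = a \<or> y = b") auto
  then show ?thesis using assms(1) unfolding invariant_def by simp
qed

lemma component_swap_far:
  assumes "a \<notin> component f x" "b \<notin> component f x"
  shows "component (transpose a b \<circ> f) x = component f x"
proof
  have "invariant (transpose a b \<circ> f) (component f x)"
    by (rule invariant_swap[OF invariant_component]) (simp add: assms)
  then show sub: "component (transpose a b \<circ> f) x \<subseteq> component f x"
    using component_subset component_self by fast
  have "invariant (transpose a b \<circ> (transpose a b \<circ> f)) (component (transpose a b \<circ> f) x)"
    by (rule invariant_swap[OF invariant_component]) (use sub assms in blast)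
  then have "invariant f (component (transpose a b \<circ> f) x)" by (simp only: swap_swap)
  then show "component f x \<subseteq> component (transpose a b \<circ> f) x"
    using component_subset component_self by fast
qed

text \<open>The union of the components of a and b is completely invariant for both maps, so it
  is the same for f and for transpose a b o f.\<close>
lemma component_swap_subset:
  "component (transpose a b \<circ> f) a \<union> component (transpose a b \<circ> f) b
     \<subseteq> component f a \<union> component f b"
proof -
  let ?U = "component f a \<union> component f b"
  have ab: "a \<in> ?U" "b \<in> ?U" using component_self by fast+
  have "invariant f ?U" using invariant_Un invariant_component by fast
  then have inv: "invariant (transpose a b \<circ> f) ?U"
    by (rule invariant_swap) (simp add: component_self)
  have "component (transpose a b \<circ> f) a \<subseteq> ?U" using inv ab(1) by (rule component_subset)
  moreover have "component (transpose a b \<circ> f) b \<subseteq> ?U" using inv ab(2) by (rule component_subset)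
  ultimately show ?thesis by (rule Un_least)
qed

lemma component_swap_union:
  "component (transpose a b \<circ> f) a \<union> component (transpose a b \<circ> f) b
     = component f a \<union> component f b"
  using component_swap_subset[of a b f] component_swap_subset[of a b "transpose a b \<circ> f"]
  by (simp only: swap_swap)

lemma cycle_swap_far:
  assumes "a \<notin> S" "b \<notin> S"
  shows "is_cycle (transpose a b \<circ> f) S \<longleftrightarrow> is_cycle f S"
proof -
  have swapped: "is_cycle (transpose a b \<circ> p) S" if cyc: "is_cycle p S" for p
  proof -
    obtain x where S: "S = component p x" using cyc unfolding is_cycle_iff_component ..
    then have "a \<notin> component p x" "b \<notin> component p x" using assms by simp_all
    then have "S = component (transpose a b \<circ> p) x"
      unfolding S by (rule component_swap_far[symmetric])
    then show ?thesis unfolding is_cycle_iff_component by blast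
  qed
  show ?thesis
  proof
    assume "is_cycle (transpose a b \<circ> f) S"
    then have "is_cycle (transpose a b \<circ> (transpose a b \<circ> f)) S" by (rule swapped)
    then show "is_cycle f S" by (simp only: swap_swap)
  qed (rule swapped)
qed

lemma swap_orbit_agrees:
  fixes f :: "'a \<Rightarrow> 'a"
  assumes "\<forall>j. 0 < j \<and> j \<le> m \<longrightarrow> (f^^j) x \<notin> {a, b}"
  shows "((transpose a b \<circ> f)^^m) x = (f^^m) x"
  using assms
proof (induction m)
  case 0
  show ?case by simp
next
  case (Suc m)
  have IH: "((transpose a b \<circ> f)^^m) x = (f^^m) x" using Suc.prems by (intro Suc.IH) auto
  have "(f^^Suc m) x \<notin> {a, b}" using Suc.prems by blast
  then have fixed: "transpose a b ((f^^Suc m) x) = (f^^Suc m) x" by simp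
  have "((transpose a b \<circ> f)^^Suc m) x = (transpose a b \<circ> f) (((transpose a b \<circ> f)^^m) x)"
    by simp
  also have "\<dots> = transpose a b ((f^^Suc m) x)" unfolding IH by simp
  finally show ?case unfolding fixed .
qed

lemma swap_first_return:
  fixes f :: "'a \<Rightarrow> 'a"
  assumes "0 < k" "(f^^k) a \<in> {a, b}"
  obtains r where "0 < r" "(f^^r) a \<in> {a, b}"
    "\<And>j. 0 < j \<Longrightarrow> j < r \<Longrightarrow> (f^^j) a \<notin> {a, b}"
    "\<And>j. j < r \<Longrightarrow> ((transpose a b \<circ> f)^^j) a = (f^^j) a"
    "((transpose a b \<circ> f)^^r) a = transpose a b ((f^^r) a)"
proof -
  define P where "P r \<longleftrightarrow> 0 < r \<and> (f^^r) a \<in> {a, b}" for r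
  obtain r where r: "P r" and least: "\<forall>j<r. \<not> P j"
    using exists_least_iff[of P] assms unfolding P_def by blast
  have before: "(f^^j) a \<notin> {a, b}" if "0 < j" "j < r" for j
    using least that unfolding P_def by blast
  have agree: "((transpose a b \<circ> f)^^j) a = (f^^j) a" if "j < r" for j
    using before that by (intro swap_orbit_agrees) auto
  obtain p where p: "r = Suc p" using r unfolding P_def by (cases r) auto
  have "((transpose a b \<circ> f)^^r) a = transpose a b (f (((transpose a b \<circ> f)^^p) a))"
    unfolding p by simp
  also have "\<dots> = transpose a b ((f^^r) a)" using agree[of p] unfolding p by simp
  finally show thesis using that r before agree unfolding P_def by blast
qed

lemma swap_splits_component:
  fixes f :: "'a \<Rightarrow> 'a"
  assumes "inj f" "a \<noteq> b" "(f^^k) a = b"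
  shows "finite (component (transpose a b \<circ> f) a)" "b \<notin> component (transpose a b \<circ> f) a"
proof -
  let ?g = "transpose a b \<circ> f"
  have "0 < k" using assms(2,3) by (cases k) auto
  then obtain r where r: "0 < r" "(f^^r) a \<in> {a, b}"
    and before: "\<And>j. 0 < j \<Longrightarrow> j < r \<Longrightarrow> (f^^j) a \<notin> {a, b}"
    and agree: "\<And>j. j < r \<Longrightarrow> (?g^^j) a = (f^^j) a"
    and last: "(?g^^r) a = transpose a b ((f^^r) a)"
    using swap_first_return[of k f a b] assms(3) by blast
  have first_hit: "(f^^r) a = b"
  proof (rule ccontr)
    assume "(f^^r) a \<noteq> b"
    then have "(f^^r) a = a" using r(2) by simp
    then have "(f^^(k mod r)) a = b" using funpow_mod_eq assms(3) by metis
    moreover have "k mod r \<noteq> 0" using calculation assms(2) by (intro notI) simp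
    moreover have "k mod r < r" using r(1) by simp
    ultimately show False using before by blast
  qed
  have "(?g^^r) a = a" using last first_hit by simp
  moreover have "inj ?g" using assms(1) by (simp add: inj_compose)
  ultimately have orbit: "component ?g a = (\<lambda>j. (?g^^j) a) ` {..<r}"
    using r(1) by (intro component_periodic)
  then show "finite (component ?g a)" by simp
  show "b \<notin> component ?g a"
  proof
    assume "b \<in> component ?g a"
    then obtain j where j: "j < r" "b = (?g^^j) a" using orbit by auto
    then have "(f^^j) a = b" using agree by simp
    then show False using before[of j] j(1) assms(2) by (cases "j = 0") auto
  qed
qed

lemma swap_merges_components:
  fixes f :: "'a \<Rightarrow> 'a"
  assumes "inj f" "b \<notin> component f a" "finite (component f a)"
  shows "b \<in> component (transpose a b \<circ> f) a"
proof -
  obtain k where k: "0 < k" "(f^^k) a = a" using finite_component_periodic[OF assms(1,3)] .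
  then have "(f^^k) a \<in> {a, b}" by simp
  with k(1) obtain r where "0 < r" and hit: "(f^^r) a \<in> {a, b}"
    and "\<And>j. 0 < j \<Longrightarrow> j < r \<Longrightarrow> (f^^j) a \<notin> {a, b}"
    and "\<And>j. j < r \<Longrightarrow> ((transpose a b \<circ> f)^^j) a = (f^^j) a"
    and last: "((transpose a b \<circ> f)^^r) a = transpose a b ((f^^r) a)"
    by (rule swap_first_return) blast
  have "(f^^r) a \<noteq> b"
    using assms(2) funpow_in_component[where f = f and m = r and x = a] by auto
  then have "((transpose a b \<circ> f)^^r) a = b" using hit last by simp
  then show ?thesis
    using funpow_in_component[where f = "transpose a b \<circ> f" and m = r and x = a] by simp
qed

subsection \<open>How the number of finite components near a and b changes\<close>

text \<open>The finite components among those of a and b; only these can change under the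
  transposition.\<close>
definition finite_components :: "('a \<Rightarrow> 'a) \<Rightarrow> 'a \<Rightarrow> 'a \<Rightarrow> 'a set set" where
  "finite_components f a b = {S \<in> {component f a, component f b}. finite S}"

lemma finite_components_commute: "finite_components f b a = finite_components f a b"
  unfolding finite_components_def by (simp only: insert_commute)

lemma card_finite_pair:
  "card {S \<in> {X, Y}. finite S}
     = (if X = Y then of_bool (finite X) else of_bool (finite X) + of_bool (finite Y))"
proof -
  have "{S \<in> {X, Y}. finite S} = (if finite X then {X} else {}) \<union> (if finite Y then {Y} else {})"
    by auto
  then show ?thesis by (cases "finite X"; cases "finite Y"; cases "X = Y") simp_all
qed

lemma swap_split_count_forward:
  fixes f :: "'a \<Rightarrow> 'a"
  assumes "inj f" "a \<noteq> b" "(f^^k) a = b"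
  shows "card (finite_components (transpose a b \<circ> f) a b) = card (finite_components f a b) + 1"
proof -
  let ?g = "transpose a b \<circ> f"
  have fin: "finite (component ?g a)" and sep: "b \<notin> component ?g a"
    using swap_splits_component[OF assms] by simp_all
  have "b \<in> component f a"
    using funpow_in_component[where f = f and m = k and x = a] assms(3) by simp
  then have same: "component f b = component f a" by (rule component_eq)
  have distinct: "component ?g a \<noteq> component ?g b" using sep component_self by metis
  have "component ?g a \<union> component ?g b = component f a"
    using component_swap_union[of a b f] same by simp
  then have "finite (component ?g b) \<longleftrightarrow> finite (component f a)" using fin by (metis finite_Un)
  then show ?thesis
    unfolding finite_components_def card_finite_pair using fin same distinct by simp
qed

text \<open>If a and b lie on a common component, one of them lies on the forward orbit of the
  other; both cases are covered by the symmetry of the transposition.\<close>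
lemma swap_split_count:
  fixes f :: "'a \<Rightarrow> 'a"
  assumes "inj f" "a \<noteq> b" "b \<in> component f a"
  shows "card (finite_components (transpose a b \<circ> f) a b) = card (finite_components f a b) + 1"
proof -
  obtain m n where mn: "(f^^m) a = (f^^n) b"
    using assms(3) unfolding component_def joined_def by blast
  show ?thesis
  proof (cases "n \<le> m")
    case True
    then have "(f^^(m - n)) a = b" using funpow_cancel[OF assms(1) mn] by simp
    then show ?thesis using swap_split_count_forward[OF assms(1,2)] by blast
  next
    case False
    then have "(f^^(n - m)) b = a" using funpow_cancel[OF assms(1) mn[symmetric]] by simp
    then show ?thesis using swap_split_count_forward[OF assms(1) assms(2)[symmetric]]
      by (simp add: finite_components_commute transpose_commute)
  qed
qed

lemma swap_merge_count_finite:
  fixes f :: "'a \<Rightarrow> 'a"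
  assumes "inj f" "b \<notin> component f a" "finite (component f a)"
  shows "card (finite_components f a b) = card (finite_components (transpose a b \<circ> f) a b) + 1"
proof -
  let ?g = "transpose a b \<circ> f"
  have "b \<in> component ?g a" by (rule swap_merges_components[OF assms])
  then have same: "component ?g b = component ?g a" by (rule component_eq)
  have distinct: "component f a \<noteq> component f b" using assms(2) component_self by metis
  have "component ?g a = component f a \<union> component f b"
    using component_swap_union[of a b f] same by simp
  then have "finite (component ?g a) \<longleftrightarrow> finite (component f b)" using assms(3) by simp
  then show ?thesis
    unfolding finite_components_def card_finite_pair using assms(3) same distinct by simp
qed

text \<open>If f has at most one infinite component, then two distinct components cannot both
  be infinite, so the merge case always applies to one of them.\<close>
lemma swap_merge_count:
  fixes f :: "'a \<Rightarrow> 'a"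
  assumes "inj f" "b \<notin> component f a"
    and unique_infinite: "\<And>x y. infinite (component f x) \<Longrightarrow> infinite (component f y)
                             \<Longrightarrow> component f x = component f y"
  shows "card (finite_components f a b) = card (finite_components (transpose a b \<circ> f) a b) + 1"
proof (cases "finite (component f a)")
  case True
  then show ?thesis by (rule swap_merge_count_finite[OF assms(1,2)])
next
  case False
  have distinct: "component f a \<noteq> component f b" using assms(2) component_self by metis
  then have "finite (component f b)" using False unique_infinite by blast
  moreover have "a \<notin> component f b" using distinct component_eq by metis
  ultimately show ?thesis using swap_merge_count_finite[OF assms(1)]
    by (simp add: finite_components_commute transpose_commute)
qed

lemma swap_count_change:
  fixes f :: "'a \<Rightarrow> 'a"
  assumes "inj f" "a \<noteq> b"
    and "\<And>x y. infinite (component f x) \<Longrightarrow> infinite (component f y)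
               \<Longrightarrow> component f x = component f y"
  shows "int (card (finite_components f a b))
           - int (card (finite_components (transpose a b \<circ> f) a b)) \<in> {-1, 1}"
  using swap_split_count[OF assms(1,2)] swap_merge_count[OF assms(1) _ assms(3)]
  by (cases "b \<in> component f a") auto

subsection \<open>Conjugation: the products fh and hf have the same cycle type\<close>

lemma invariant_conj:
  fixes h q :: "'a \<Rightarrow> 'a"
  assumes inv: "\<And>x. h (h x) = x"
  shows "invariant (h \<circ> q \<circ> h) (h ` S) \<longleftrightarrow> invariant q S"
proof -
  have mem: "h y \<in> h ` S \<longleftrightarrow> y \<in> S" for y by (metis inv image_eqI imageE)
  have "invariant (h \<circ> q \<circ> h) (h ` S) \<longleftrightarrow> (\<forall>x. q (h x) \<in> S \<longleftrightarrow> h x \<in> S)"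
    unfolding invariant_def using mem by (metis comp_apply inv)
  also have "\<dots> \<longleftrightarrow> invariant q S" unfolding invariant_def by (metis inv)
  finally show ?thesis .
qed

lemma is_cycle_conj:
  fixes h q :: "'a \<Rightarrow> 'a"
  assumes inv: "\<And>x. h (h x) = x"
  shows "is_cycle (h \<circ> q \<circ> h) (h ` S) \<longleftrightarrow> is_cycle q S"
proof -
  have hh: "h ` h ` T = T" for T using inv by (simp add: image_image)
  have "inj h" using inv by (metis injI)
  then have psub: "h ` A \<subset> h ` B \<longleftrightarrow> A \<subset> B" for A B
    by (simp add: psubset_eq inj_image_subset_iff inj_image_eq_iff)
  have ex: "(\<exists>T. P T) \<longleftrightarrow> (\<exists>T. P (h ` T))" for P using hh by metis
  show ?thesis
    unfolding is_cycle_invariant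
      ex[where P = "\<lambda>T. T \<noteq> {} \<and> T \<subset> h ` S \<and> invariant (h \<circ> q \<circ> h) T"]
    by (simp add: psub invariant_conj[OF inv])
qed

text \<open>Since h o f = h o (f o h) o h for an involution h, the cycles of h o f are the
  images under h of the cycles of f o h.\<close>
lemma cycles_of_size_conj:
  fixes h f :: "'a \<Rightarrow> 'a"
  assumes inv: "\<And>x. h (h x) = x"
  shows "cycles_of_size (h \<circ> f) n = image h ` cycles_of_size (f \<circ> h) n"
proof -
  have hh: "h ` h ` T = T" for T using inv by (simp add: image_image)
  have "inj h" using inv by (metis injI)
  have conj: "h \<circ> f = h \<circ> (f \<circ> h) \<circ> h" using inv by (simp add: fun_eq_iff)
  have "S \<in> cycles_of_size (h \<circ> f) n \<longleftrightarrow> h ` S \<in> cycles_of_size (f \<circ> h) n" for S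
  proof -
    have "is_cycle (h \<circ> f) S \<longleftrightarrow> is_cycle (f \<circ> h) (h ` S)"
      using is_cycle_conj[OF inv, of "f \<circ> h" "h ` S"] unfolding conj hh .
    moreover have "finite (h ` S) \<longleftrightarrow> finite S" "card (h ` S) = card S"
      using \<open>inj h\<close> by (simp_all add: finite_image_iff inj_on_subset card_image)
    ultimately show ?thesis unfolding cycles_of_size_def by simp
  qed
  moreover have "S \<in> image h ` X \<longleftrightarrow> h ` S \<in> X" for S X by (metis hh image_eqI imageE)
  ultimately show ?thesis by blast
qed

lemma cycles_of_size_conj_card:
  fixes h f :: "'a \<Rightarrow> 'a"
  assumes inv: "\<And>x. h (h x) = x"
  shows "card (cycles_of_size (f \<circ> h) n) = card (cycles_of_size (h \<circ> f) n)"
    and "finite (cycles_of_size (f \<circ> h) n) \<longleftrightarrow> finite (cycles_of_size (h \<circ> f) n)"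
proof -
  have "inj h" using inv by (metis injI)
  then have "inj_on (image h) X" for X by (meson inj_image_eq_iff inj_onI)
  then show "card (cycles_of_size (f \<circ> h) n) = card (cycles_of_size (h \<circ> f) n)"
    and "finite (cycles_of_size (f \<circ> h) n) \<longleftrightarrow> finite (cycles_of_size (h \<circ> f) n)"
    unfolding cycles_of_size_conj[OF inv] by (simp_all add: card_image finite_image_iff)
qed

definition far_cycles :: "('a \<Rightarrow> 'a) \<Rightarrow> 'a \<Rightarrow> 'a \<Rightarrow> nat \<Rightarrow> 'a set set" where
  "far_cycles f a b n = {S \<in> cycles_of_size f n. a \<notin> S \<and> b \<notin> S}"

definition near_cycles :: "('a \<Rightarrow> 'a) \<Rightarrow> 'a \<Rightarrow> 'a \<Rightarrow> nat \<Rightarrow> 'a set set" where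
  "near_cycles f a b n = {S \<in> finite_components f a b. card S = n}"

lemma cycles_of_size_zero: "cycles_of_size f 0 = {}"
  unfolding cycles_of_size_def is_cycle_def by auto

lemma cycles_of_size_split:
  "cycles_of_size f n = far_cycles f a b n \<union> near_cycles f a b n"
  "far_cycles f a b n \<inter> near_cycles f a b n = {}"
proof -
  have "S \<in> near_cycles f a b n" if cyc: "S \<in> cycles_of_size f n" and ab: "a \<in> S \<or> b \<in> S" for S
  proof -
    obtain x where S: "S = component f x" "finite S" "card S = n"
      using cyc unfolding cycles_of_size_def is_cycle_iff_component by blast
    then have "S = component f a \<or> S = component f b" using ab component_eq by metis
    then show ?thesis using S unfolding near_cycles_def finite_components_def by blast
  qed
  moreover have "near_cycles f a b n \<subseteq> cycles_of_size f n"
    unfolding near_cycles_def finite_components_def cycles_of_size_def is_cycle_iff_component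
    by blast
  ultimately show "cycles_of_size f n = far_cycles f a b n \<union> near_cycles f a b n"
    unfolding far_cycles_def by blast
  show "far_cycles f a b n \<inter> near_cycles f a b n = {}"
    unfolding far_cycles_def near_cycles_def finite_components_def using component_self by fast
qed

lemma finite_near_cycles: "finite (near_cycles f a b n)"
  unfolding near_cycles_def finite_components_def by simp

lemma far_cycles_swap: "far_cycles (transpose a b \<circ> f) a b n = far_cycles f a b n"
  unfolding far_cycles_def cycles_of_size_def by (auto simp: cycle_swap_far)

lemma swap_cycle_count:
  assumes "finite (cycles_of_size f n)"
  shows "finite (cycles_of_size (transpose a b \<circ> f) n)"
    and "int (card (cycles_of_size f n)) - int (card (cycles_of_size (transpose a b \<circ> f) n))
           = int (card (near_cycles f a b n)) - int (card (near_cycles (transpose a b \<circ> f) a b n))"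
proof -
  let ?g = "transpose a b \<circ> f"
  have far: "finite (far_cycles f a b n)"
    using assms unfolding far_cycles_def by simp
  then show "finite (cycles_of_size ?g n)"
    unfolding cycles_of_size_split(1)[of ?g n a b] far_cycles_swap by (simp add: finite_near_cycles)
  have "card (cycles_of_size p n) = card (far_cycles p a b n) + card (near_cycles p a b n)"
    if "finite (far_cycles p a b n)" for p :: "'a \<Rightarrow> 'a"
    unfolding cycles_of_size_split(1)[of p n a b]
    using that finite_near_cycles cycles_of_size_split(2) by (rule card_Un_disjoint)
  from this[of f] this[of ?g]
  show "int (card (cycles_of_size f n)) - int (card (cycles_of_size ?g n))
          = int (card (near_cycles f a b n)) - int (card (near_cycles ?g a b n))"
    using far by (simp add: far_cycles_swap)
qed

lemma sum_near_cycles: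
  assumes "finite K" "card ` finite_components f a b \<subseteq> K"
  shows "(\<Sum>n\<in>K. card (near_cycles f a b n)) = card (finite_components f a b)"
proof -
  have "(\<Sum>n\<in>K. \<Sum>S\<in>{S \<in> finite_components f a b. card S = n}. 1)
      = (\<Sum>S\<in>finite_components f a b. 1::nat)"
    using assms by (intro sum.group) (simp_all add: finite_components_def)
  then show ?thesis unfolding near_cycles_def by simp
qed

lemma swap_cycle_count_sum:
  fixes f :: "'a \<Rightarrow> 'a" and a b :: 'a
  assumes fin: "\<forall>n>0. finite (cycles_of_size f n)"
  defines "D \<equiv> {n. n > 0 \<and> card (cycles_of_size f n)
                              \<noteq> card (cycles_of_size (transpose a b \<circ> f) n)}"
  shows "finite D"
    and "(\<Sum>n\<in>D. int (card (cycles_of_size f n))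
                  - int (card (cycles_of_size (transpose a b \<circ> f) n)))
           = int (card (finite_components f a b))
               - int (card (finite_components (transpose a b \<circ> f) a b))"
proof -
  let ?g = "transpose a b \<circ> f"
  define K where "K = card ` (finite_components f a b \<union> finite_components ?g a b)"
  have finK: "finite K" unfolding K_def finite_components_def by simp
  have diff: "int (card (cycles_of_size f n)) - int (card (cycles_of_size ?g n))
      = int (card (near_cycles f a b n)) - int (card (near_cycles ?g a b n))" for n
  proof -
    have "finite (cycles_of_size f n)" using fin cycles_of_size_zero[of f] by (cases n) auto
    then show ?thesis by (rule swap_cycle_count(2))
  qed
  have "D \<subseteq> K"
  proof
    fix n assume "n \<in> D"
    then have "near_cycles f a b n \<union> near_cycles ?g a b n \<noteq> {}"
      using diff[of n] unfolding D_def by auto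
    then show "n \<in> K" unfolding K_def near_cycles_def by blast
  qed
  then show "finite D" using finK by (rule finite_subset)
  have "(\<Sum>n\<in>D. int (card (cycles_of_size f n)) - int (card (cycles_of_size ?g n)))
      = (\<Sum>n\<in>K. int (card (near_cycles f a b n)) - int (card (near_cycles ?g a b n)))"
    unfolding diff[symmetric] using finK \<open>D \<subseteq> K\<close>
    by (intro sum.mono_neutral_left) (auto simp: D_def cycles_of_size_zero intro: gr0I)
  also have "\<dots> = int (card (finite_components f a b)) - int (card (finite_components ?g a b))"
  proof -
    have "card ` finite_components f a b \<subseteq> K" "card ` finite_components ?g a b \<subseteq> K"
      unfolding K_def by auto
    then have "(\<Sum>n\<in>K. card (near_cycles f a b n)) = card (finite_components f a b)"
      and "(\<Sum>n\<in>K. card (near_cycles ?g a b n)) = card (finite_components ?g a b)"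
      using finK by (simp_all add: sum_near_cycles)
    then show ?thesis by (simp add: sum_subtractf flip: of_nat_sum)
  qed
  finally show "(\<Sum>n\<in>D. int (card (cycles_of_size f n)) - int (card (cycles_of_size ?g n)))
      = int (card (finite_components f a b)) - int (card (finite_components ?g a b))" .
qed

lemma infinite_component_unique:
  assumes "finite (open_cycles f)" "finite (fwd_cycles f)"
    and "card (open_cycles f) + card (fwd_cycles f) \<le> 1"
    and "infinite (component f x)" "infinite (component f y)"
  shows "component f x = component f y"
proof -
  let ?I = "open_cycles f \<union> fwd_cycles f"
  have "card ?I \<le> 1" using card_Un_le[of "open_cycles f" "fwd_cycles f"] assms(3) by linarith
  moreover have "component f x \<in> ?I" "component f y \<in> ?I"
    using assms(4,5) unfolding open_cycles_def fwd_cycles_def is_cycle_iff_component by blast+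
  moreover have "finite ?I" using assms(1,2) by simp
  ultimately show ?thesis using card_le_Suc0_iff_eq[of ?I] by simp
qed

text \<open>The hypotheses on open and forward cycles say that f has exactly one infinite
  cycle, which is all the argument needs.\<close>
theorem mainTheorem16:
  fixes f :: "'a::countable \<Rightarrow> 'a" and a b :: 'a
  assumes "infinite (UNIV :: 'a set)"
    and "inj f"
    and "finite (open_cycles f)" and "finite (fwd_cycles f)"
    and "card (open_cycles f) + card (fwd_cycles f) = 1"
    and "\<forall>n>0. finite (cycles_of_size f n)"
    and "a \<noteq> b"
  shows "(\<forall>n>0. finite (cycles_of_size (transpose a b \<circ> f) n)
                \<and> finite (cycles_of_size (f \<circ> transpose a b) n))
     \<and> finite {n. n > 0 \<and> card (cycles_of_size f n) \<noteq> card (cycles_of_size (transpose a b \<circ> f) n)}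
     \<and> finite {n. n > 0 \<and> card (cycles_of_size f n) \<noteq> card (cycles_of_size (f \<circ> transpose a b) n)}
     \<and> (\<Sum>n\<in>{n. n > 0 \<and> card (cycles_of_size f n) \<noteq> card (cycles_of_size (transpose a b \<circ> f) n)}.
           int (card (cycles_of_size f n)) - int (card (cycles_of_size (transpose a b \<circ> f) n)))
       = (\<Sum>n\<in>{n. n > 0 \<and> card (cycles_of_size f n) \<noteq> card (cycles_of_size (f \<circ> transpose a b) n)}.
           int (card (cycles_of_size f n)) - int (card (cycles_of_size (f \<circ> transpose a b) n)))
     \<and> (\<Sum>n\<in>{n. n > 0 \<and> card (cycles_of_size f n) \<noteq> card (cycles_of_size (transpose a b \<circ> f) n)}.
           int (card (cycles_of_size f n)) - int (card (cycles_of_size (transpose a b \<circ> f) n)))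
       \<in> {-1, 1}"
proof -
  let ?h = "transpose a b"
  have finite_swap: "finite (cycles_of_size (?h \<circ> f) n)" if "0 < n" for n
    using assms(6) that by (intro swap_cycle_count(1)) simp
  have conj: "card (cycles_of_size (f \<circ> ?h) n) = card (cycles_of_size (?h \<circ> f) n)"
    "finite (cycles_of_size (f \<circ> ?h) n) \<longleftrightarrow> finite (cycles_of_size (?h \<circ> f) n)" for n
    by (rule cycles_of_size_conj_card, simp)+
  have unique: "component f x = component f y"
    if "infinite (component f x)" "infinite (component f y)" for x y
    using infinite_component_unique[OF assms(3,4) _ that] assms(5) by simp
  have change: "int (card (finite_components f a b))
      - int (card (finite_components (?h \<circ> f) a b)) \<in> {-1, 1}"
    using swap_count_change[OF assms(2,7) unique] .
  show ?thesis
    unfolding conj swap_cycle_count_sum(2)[OF assms(6)]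
    using finite_swap swap_cycle_count_sum(1)[OF assms(6)] change by blast
qed

end
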